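(* Let $L$ be an $\omega$-regular language that is tDCW-positive. Then every two nice tDCWs $\mathcal{A}_1,\mathcal{A}_2$ recognizing $L$ that are minimal (no tDCW recognizing $L$ has fewer states) are safe isomorphic.
   Context: A tNCW is $\mathcal{A}=\langle\Sigma,Q,q_0,\delta,\alpha\rangle$: finite alphabet $\Sigma$, finite state set $Q$, initial state $q_0$, transition function $\delta:Q\times\Sigma\to 2^Q\setminus\{\emptyset\}$ with transition relation $\Delta=\{\langle q,\sigma,s\rangle:s\in\delta(q,\sigma)\}$, and $\alpha\subseteq\Delta$; its size is $|Q|$. $\alpha$-transitions are those in $\alpha$, $\bar\alpha$-transitions those in $\Delta\setminus\alpha$; $\delta^{\bar\alpha}(q,\sigma)$ denotes the $\sigma$-successors via $\bar\alpha$-transitions. A run on $w=\sigma_1\sigma_2\cdots$ is $r_0r_1\cdots$ with $r_0=q_0$, $r_{i+1}\in\delta(r_i,\sigma_{i+1})$; accepting iff it traverses $\alpha$-transitions only finitely often; $L(\mathcal{A})$ the accepted language. A tDCW is a tNCW with $|\delta(q,\sigma)|=1$ for all $q,\sigma$. $\mathcal{A}^q$ is $\mathcal{A}$ with initial state $q$; $q\sim s$ iff $L(\mathcal{A}^q)=L(\mathcal{A}^s)$. $\mathcal{A}$ is GFG if there is $f:\Sigma^*\to Q$ with $f(\epsilon)=q_0$, $\langle f(u),\sigma,f(u\sigma)\rangle\in\Delta$ for all $u,\sigma$, and for every $w\in L(\mathcal{A})$ the run $f(w[1,0]),f(w[1,1]),\dots$ accepting; $q$ is GFG if $\mathcal{A}^q$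 is. Nice: all states reachable and GFG, semantically deterministic (all $\sigma$-successors of a state pairwise $\sim$), safe deterministic ($|\delta^{\bar\alpha}(q,\sigma)|\le1$), and normal (a path of $\bar\alpha$-transitions from $q$ to $s$ implies one from $s$ to $q$). An $\omega$-regular language $L$ is tDCW-positive if the minimal number of states of a tDCW recognizing $L$ is not larger than the minimal number of states of a GFG-tNCW recognizing $L$. Two tNCWs $\mathcal{A},\mathcal{B}$ are safe isomorphic if there is a bijection $\kappa:Q_\mathcal{A}\to Q_\mathcal{B}$ such that for all $q,q'\in Q_\mathcal{A}$ and $\sigma\in\Sigma$: $q'\in\delta^{\bar\alpha}_\mathcal{A}(q,\sigma)$ iff $\kappa(q')\in\delta^{\bar\alpha}_\mathcal{B}(\kappa(q),\sigma)$. *)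

theory Defs
  imports Main
begin

text \<open>Automata over a finite alphabet, given as a finite type 'a.
  Infinite words are functions nat => 'a; w i is the (i+1)-th letter.\<close>

record ('s, 'a) tNCW =
  states :: "'s set"
  init   :: 's
  trans  :: "'s \<Rightarrow> 'a \<Rightarrow> 's set"
  acc    :: "('s \<times> 'a \<times> 's) set"

definition Delta :: "('s, 'a) tNCW \<Rightarrow> ('s \<times> 'a \<times> 's) set" where
  "Delta A = {(q, \<sigma>, s). q \<in> states A \<and> s \<in> trans A q \<sigma>}"

definition wf_aut :: "('s, 'a) tNCW \<Rightarrow> bool" where
  "wf_aut A \<longleftrightarrow> finite (states A) \<and> init A \<in> states A \<and>
     (\<forall>q \<in> states A. \<forall>\<sigma>. trans A q \<sigma> \<noteq> {} \<and> trans A q \<sigma> \<subseteq> states A) \<and>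
     acc A \<subseteq> Delta A"

definition is_run :: "('s, 'a) tNCW \<Rightarrow> (nat \<Rightarrow> 'a) \<Rightarrow> (nat \<Rightarrow> 's) \<Rightarrow> bool" where
  "is_run A w r \<longleftrightarrow> r 0 = init A \<and> (\<forall>i. r (Suc i) \<in> trans A (r i) (w i))"

text \<open>co-Buechi acceptance: alpha-transitions are traversed only finitely often.\<close>
definition cobuchi_accepting :: "('s, 'a) tNCW \<Rightarrow> (nat \<Rightarrow> 'a) \<Rightarrow> (nat \<Rightarrow> 's) \<Rightarrow> bool" where
  "cobuchi_accepting A w r \<longleftrightarrow> finite {i. (r i, w i, r (Suc i)) \<in> acc A}"

definition lang :: "('s, 'a) tNCW \<Rightarrow> (nat \<Rightarrow> 'a) set" where
  "lang A = {w. \<exists>r. is_run A w r \<and> cobuchi_accepting A w r}"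

definition with_init :: "('s, 'a) tNCW \<Rightarrow> 's \<Rightarrow> ('s, 'a) tNCW" where
  "with_init A q = A\<lparr>init := q\<rparr>"

definition is_tDCW :: "('s, 'a) tNCW \<Rightarrow> bool" where
  "is_tDCW A \<longleftrightarrow> wf_aut A \<and> (\<forall>q \<in> states A. \<forall>\<sigma>. card (trans A q \<sigma>) = 1)"

definition prefix_word :: "(nat \<Rightarrow> 'a) \<Rightarrow> nat \<Rightarrow> 'a list" where
  "prefix_word w i = map w [0..<i]"

definition is_GFG :: "('s, 'a) tNCW \<Rightarrow> bool" where
  "is_GFG A \<longleftrightarrow> (\<exists>f :: 'a list \<Rightarrow> 's.
     f [] = init A \<and>
     (\<forall>u \<sigma>. (f u, \<sigma>, f (u @ [\<sigma>])) \<in> Delta A) \<and>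
     (\<forall>w \<in> lang A. cobuchi_accepting A w (\<lambda>i. f (prefix_word w i))))"

definition GFG_state :: "('s, 'a) tNCW \<Rightarrow> 's \<Rightarrow> bool" where
  "GFG_state A q \<longleftrightarrow> is_GFG (with_init A q)"

definition edges :: "('s, 'a) tNCW \<Rightarrow> ('s \<times> 's) set" where
  "edges A = {(q, s). \<exists>\<sigma>. (q, \<sigma>, s) \<in> Delta A}"

definition safe_edges :: "('s, 'a) tNCW \<Rightarrow> ('s \<times> 's) set" where
  "safe_edges A = {(q, s). \<exists>\<sigma>. (q, \<sigma>, s) \<in> Delta A - acc A}"

definition safe_succ :: "('s, 'a) tNCW \<Rightarrow> 's \<Rightarrow> 'a \<Rightarrow> 's set" where
  "safe_succ A q \<sigma> = {s. (q, \<sigma>, s) \<in> Delta A - acc A}"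

definition equiv_states :: "('s, 'a) tNCW \<Rightarrow> 's \<Rightarrow> 's \<Rightarrow> bool" where
  "equiv_states A q s \<longleftrightarrow> lang (with_init A q) = lang (with_init A s)"

definition nice :: "('s, 'a) tNCW \<Rightarrow> bool" where
  "nice A \<longleftrightarrow>
     (\<forall>q \<in> states A. (init A, q) \<in> (edges A)\<^sup>* \<and> GFG_state A q) \<and>
     (\<forall>q \<in> states A. \<forall>\<sigma>. \<forall>s \<in> trans A q \<sigma>. \<forall>s' \<in> trans A q \<sigma>. equiv_states A s s') \<and>
     (\<forall>q \<in> states A. \<forall>\<sigma>. card (safe_succ A q \<sigma>) \<le> 1) \<and>
     (\<forall>q \<in> states A. \<forall>s \<in> states A. (q, s) \<in> (safe_edges A)\<^sup>* \<longrightarrow> (s, q) \<in> (safe_edges A)\<^sup>*)"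

definition buchi_lang :: "('s, 'a) tNCW \<Rightarrow> (nat \<Rightarrow> 'a) set" where
  "buchi_lang A = {w. \<exists>r. is_run A w r \<and> infinite {i. (r i, w i, r (Suc i)) \<in> acc A}}"

definition omega_regular :: "(nat \<Rightarrow> 'a) set \<Rightarrow> bool" where
  "omega_regular L \<longleftrightarrow> (\<exists>A :: (nat, 'a) tNCW. wf_aut A \<and> buchi_lang A = L)"

text \<open>Minimal sizes; automata of arbitrary finite state type are represented
  up to renaming by automata with natural-number states.\<close>
definition min_tDCW_size :: "(nat \<Rightarrow> 'a) set \<Rightarrow> nat" where
  "min_tDCW_size L = (LEAST n. \<exists>D :: (nat, 'a) tNCW. is_tDCW D \<and> lang D = L \<and> card (states D) = n)"

definition min_GFG_size :: "(nat \<Rightarrow> 'a) set \<Rightarrow> nat" where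
  "min_GFG_size L = (LEAST n. \<exists>B :: (nat, 'a) tNCW. wf_aut B \<and> is_GFG B \<and> lang B = L \<and> card (states B) = n)"

definition tDCW_positive :: "(nat \<Rightarrow> 'a) set \<Rightarrow> bool" where
  "tDCW_positive L \<longleftrightarrow> min_tDCW_size L \<le> min_GFG_size L"

definition safe_isomorphic :: "('s, 'a) tNCW \<Rightarrow> ('t, 'a) tNCW \<Rightarrow> bool" where
  "safe_isomorphic A B \<longleftrightarrow> (\<exists>\<kappa>. bij_betw \<kappa> (states A) (states B) \<and>
     (\<forall>q \<in> states A. \<forall>q' \<in> states A. \<forall>\<sigma>.
        q' \<in> safe_succ A q \<sigma> \<longleftrightarrow> \<kappa> q' \<in> safe_succ B (\<kappa> q) \<sigma>))"

end

theory Submission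
  imports Defs "HOL-Library.Omega_Words_Fun"
begin

text \<open>Compare states by two languages: the language L(q), and the safe language of the words
  read from q along non-alpha transitions only. In a nice tDCW the pair of languages of a state
  determines its safe transitions, and a pumping argument along safe cycles shows that for two
  nice tDCWs with the same language every state of one is dominated, in both languages, by a
  state of the other. For a tDCW-positive language a minimal tDCW is also a minimal GFG-tNCW.
  Keeping one state per class of strongly equivalent states (states with the same pair of
  languages) in maximal safe components already yields a GFG automaton for the language, so
  minimality forces all safe components to be maximal and strongly equivalent states to
  coincide. Between two such automata, mapping each state to its strongly equivalent partner
  is then a bijection preserving safe transitions.\<close>

section \<open>Deterministic automata\<close>

text \<open>Only meaningful on states of a tDCW, where trans is a singleton; elsewhere the_elem
  returns an unspecified state.\<close>
definition dstep :: "('s, 'a) tNCW \<Rightarrow> 's \<Rightarrow> 'a \<Rightarrow> 's" where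
  "dstep A q \<sigma> = the_elem (trans A q \<sigma>)"

definition dsteps :: "('s, 'a) tNCW \<Rightarrow> 's \<Rightarrow> 'a list \<Rightarrow> 's" where
  "dsteps A = foldl (dstep A)"

definition drun :: "('s, 'a) tNCW \<Rightarrow> 's \<Rightarrow> 'a word \<Rightarrow> nat \<Rightarrow> 's" where
  "drun A q w n = dsteps A q (prefix n w)"

definition safe_step :: "('s, 'a) tNCW \<Rightarrow> 's \<Rightarrow> 'a \<Rightarrow> bool" where
  "safe_step A q \<sigma> \<longleftrightarrow> (q, \<sigma>, dstep A q \<sigma>) \<notin> acc A"

primrec safe_word :: "('s, 'a) tNCW \<Rightarrow> 's \<Rightarrow> 'a list \<Rightarrow> bool" where
  "safe_word A q [] \<longleftrightarrow> True"
| "safe_word A q (\<sigma> # u) \<longleftrightarrow> safe_step A q \<sigma> \<and> safe_word A (dstep A q \<sigma>) u"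

definition safe_lang :: "('s, 'a) tNCW \<Rightarrow> 's \<Rightarrow> 'a word set" where
  "safe_lang A q = {w. \<forall>i. safe_step A (drun A q w i) (w i)}"

definition state_lang :: "('s, 'a) tNCW \<Rightarrow> 's \<Rightarrow> 'a word set" where
  "state_lang A q = {w. MOST i. safe_step A (drun A q w i) (w i)}"

lemma trans_tDCW:
  assumes "is_tDCW A" and "q \<in> states A"
  shows "trans A q \<sigma> = {dstep A q \<sigma>}"
proof -
  have "card (trans A q \<sigma>) = 1"
    using assms unfolding is_tDCW_def by blast
  then obtain s where "trans A q \<sigma> = {s}"
    by (meson card_1_singletonE)
  then show ?thesis
    by (simp add: dstep_def)
qed

lemma init_in_states: "is_tDCW A \<Longrightarrow> init A \<in> states A"
  by (simp add: is_tDCW_def wf_aut_def)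

lemma finite_states: "is_tDCW A \<Longrightarrow> finite (states A)"
  by (simp add: is_tDCW_def wf_aut_def)

lemma dstep_in_states:
  assumes "is_tDCW A" and "q \<in> states A"
  shows "dstep A q \<sigma> \<in> states A"
  using assms trans_tDCW[OF assms] unfolding is_tDCW_def wf_aut_def by blast

lemma dsteps_Nil [simp]: "dsteps A q [] = q"
  and dsteps_Cons [simp]: "dsteps A q (\<sigma> # u) = dsteps A (dstep A q \<sigma>) u"
  and dsteps_append [simp]: "dsteps A q (u @ v) = dsteps A (dsteps A q u) v"
  by (simp_all add: dsteps_def)

lemma dsteps_in_states:
  assumes "is_tDCW A" and "q \<in> states A"
  shows "dsteps A q u \<in> states A"
  using assms(2) by (induction u arbitrary: q) (simp_all add: dstep_in_states[OF assms(1)])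

lemma drun_0 [simp]: "drun A q w 0 = q"
  by (simp add: drun_def)

lemma drun_Suc: "drun A q w (Suc n) = dstep A (drun A q w n) (w n)"
  by (simp add: drun_def)

lemma drun_in_states: "is_tDCW A \<Longrightarrow> q \<in> states A \<Longrightarrow> drun A q w n \<in> states A"
  unfolding drun_def by (rule dsteps_in_states)

lemma drun_add: "drun A q w (m + n) = drun A (drun A q w m) (suffix m w) n"
  by (induction n) (simp_all add: drun_Suc)

lemma drun_conc: "drun A q (u \<frown> w) (length u + n) = drun A (dsteps A q u) w n"
  by (simp add: drun_add) (simp add: drun_def)

lemma prefix_word_eq: "prefix_word w i = prefix i w"
  by (simp add: prefix_word_def subsequence_def)

lemma safe_word_append [simp]:
  "safe_word A q (u @ v) \<longleftrightarrow> safe_word A q u \<and> safe_word A (dsteps A q u) v"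
  by (induction u arbitrary: q) auto

lemma safe_word_prefix:
  "safe_word A q (prefix n w) \<longleftrightarrow> (\<forall>i<n. safe_step A (drun A q w i) (w i))"
  by (induction n) (auto simp: drun_def less_Suc_eq)

lemma safe_lang_subset_state_lang: "safe_lang A q \<subseteq> state_lang A q"
  unfolding safe_lang_def state_lang_def by auto

lemma state_lang_suffix: "w \<in> state_lang A q \<longleftrightarrow> suffix n w \<in> state_lang A (drun A q w n)"
proof -
  have "(MOST i. safe_step A (drun A q w i) (w i)) \<longleftrightarrow>
        (MOST i. safe_step A (drun A q w (i + n)) (w (i + n)))"
    unfolding cofinite_eq_sequentially
    by (rule eventually_sequentially_seg[where P = "\<lambda>i. safe_step A (drun A q w i) (w i)", symmetric])
  moreover have "drun A q w (i + n) = drun A (drun A q w n) (suffix n w) i" for i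
    by (metis add.commute drun_add)
  ultimately show ?thesis
    unfolding state_lang_def by (simp add: add.commute)
qed

lemma state_lang_conc: "u \<frown> w \<in> state_lang A q \<longleftrightarrow> w \<in> state_lang A (dsteps A q u)"
  by (subst state_lang_suffix[where n = "length u"]) (simp add: drun_def)

lemma safe_lang_conc:
  "u \<frown> w \<in> safe_lang A q \<longleftrightarrow> safe_word A q u \<and> w \<in> safe_lang A (dsteps A q u)"
proof -
  have "(\<forall>i. safe_step A (drun A q (u \<frown> w) i) ((u \<frown> w) i)) \<longleftrightarrow>
        (\<forall>i<length u. safe_step A (drun A q (u \<frown> w) i) ((u \<frown> w) i)) \<and>
        (\<forall>n. safe_step A (drun A q (u \<frown> w) (length u + n)) ((u \<frown> w) (length u + n)))"
    by (metis le_add_diff_inverse not_less)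
  also have "\<dots> \<longleftrightarrow> safe_word A q u \<and> w \<in> safe_lang A (dsteps A q u)"
    using safe_word_prefix[of A q "u \<frown> w" "length u"] by (simp add: drun_conc safe_lang_def)
  finally show ?thesis
    unfolding safe_lang_def by simp
qed

lemma state_lang_dsteps_cong:
  "state_lang A x = state_lang B z \<Longrightarrow> state_lang A (dsteps A x u) = state_lang B (dsteps B z u)"
  by (auto simp: set_eq_iff state_lang_conc[symmetric])

lemma state_lang_dstep_cong:
  "state_lang A x = state_lang B z \<Longrightarrow> state_lang A (dstep A x \<sigma>) = state_lang B (dstep B z \<sigma>)"
  using state_lang_dsteps_cong[of A x B z "[\<sigma>]"] by simp

lemma lang_with_init_tDCW:
  assumes A: "is_tDCW A" and q: "q \<in> states A"
  shows "lang (with_init A q) = state_lang A q"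
proof -
  have run_iff: "is_run (with_init A q) w r \<longleftrightarrow> r = drun A q w" for w r
  proof
    assume r: "is_run (with_init A q) w r"
    have "r i = drun A q w i" for i
    proof (induction i)
      case (Suc i)
      have "r (Suc i) \<in> trans A (r i) (w i)"
        using r by (simp add: is_run_def with_init_def)
      then show ?case
        using Suc trans_tDCW[OF A drun_in_states[OF A q]] by (simp add: drun_Suc)
    qed (use r in \<open>simp add: is_run_def with_init_def\<close>)
    then show "r = drun A q w" ..
  qed (simp add: is_run_def with_init_def drun_Suc trans_tDCW[OF A drun_in_states[OF A q]])
  have "lang (with_init A q) = {w. cobuchi_accepting (with_init A q) w (drun A q w)}"
    unfolding lang_def run_iff by simp
  then show ?thesis
    by (simp add: cobuchi_accepting_def state_lang_def MOST_iff_cofinite safe_step_def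
        with_init_def drun_Suc)
qed

corollary lang_tDCW:
  assumes "is_tDCW A"
  shows "lang A = state_lang A (init A)"
  using lang_with_init_tDCW[OF assms init_in_states[OF assms]] by (simp add: with_init_def)

section \<open>Safe components of nice deterministic automata\<close>

definition nice_tDCW :: "('s, 'a) tNCW \<Rightarrow> bool" where
  "nice_tDCW A \<longleftrightarrow> is_tDCW A \<and> nice A"

lemma nice_tDCW_is_tDCW: "nice_tDCW A \<Longrightarrow> is_tDCW A"
  by (simp add: nice_tDCW_def)

lemma safe_edges_rtrancl_iff:
  assumes A: "is_tDCW A" and x: "x \<in> states A"
  shows "(x, y) \<in> (safe_edges A)\<^sup>* \<longleftrightarrow> (\<exists>u. safe_word A x u \<and> dsteps A x u = y)"
proof
  assume "(x, y) \<in> (safe_edges A)\<^sup>*"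
  then show "\<exists>u. safe_word A x u \<and> dsteps A x u = y"
  proof (induction rule: rtrancl_induct)
    case base
    show ?case
      by (rule exI[of _ "[]"]) simp
  next
    case (step y z)
    then obtain u where u: "safe_word A x u" "dsteps A x u = y"
      by blast
    obtain \<sigma> where "(y, \<sigma>, z) \<in> Delta A - acc A"
      using step(2) unfolding safe_edges_def by blast
    then have "z = dstep A y \<sigma>" "safe_step A y \<sigma>"
      using trans_tDCW[OF A] by (auto simp: Delta_def safe_step_def)
    then show ?case
      using u by (intro exI[of _ "u @ [\<sigma>]"]) simp
  qed
next
  assume "\<exists>u. safe_word A x u \<and> dsteps A x u = y"
  then obtain u where "safe_word A x u" "dsteps A x u = y"
    by blast
  with x show "(x, y) \<in> (safe_edges A)\<^sup>*"
  proof (induction u arbitrary: x)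
    case (Cons \<sigma> u)
    have "(x, dstep A x \<sigma>) \<in> safe_edges A"
      using Cons.prems trans_tDCW[OF A] by (auto simp: safe_edges_def Delta_def safe_step_def)
    moreover have "(dstep A x \<sigma>, y) \<in> (safe_edges A)\<^sup>*"
      using Cons dstep_in_states[OF A] by simp
    ultimately show ?case
      by (rule converse_rtrancl_into_rtrancl)
  qed simp
qed

lemma edges_rtrancl_imp_dsteps:
  assumes A: "is_tDCW A" and "(x, y) \<in> (edges A)\<^sup>*"
  shows "\<exists>u. dsteps A x u = y"
  using assms(2)
proof (induction rule: rtrancl_induct)
  case base
  show ?case
    by (rule exI[of _ "[]"]) simp
next
  case (step y z)
  then obtain u where "dsteps A x u = y"
    by blast
  moreover obtain \<sigma> where "(y, \<sigma>, z) \<in> Delta A"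
    using step(2) unfolding edges_def by blast
  then have "z = dstep A y \<sigma>"
    using trans_tDCW[OF A] by (auto simp: Delta_def)
  ultimately show ?case
    by (intro exI[of _ "u @ [\<sigma>]"]) simp
qed

lemma nice_tDCW_reachable:
  assumes "nice_tDCW A" and "p \<in> states A"
  shows "\<exists>u. dsteps A (init A) u = p"
proof -
  have "(init A, p) \<in> (edges A)\<^sup>*"
    using assms unfolding nice_tDCW_def nice_def by simp
  then show ?thesis
    by (rule edges_rtrancl_imp_dsteps[OF nice_tDCW_is_tDCW[OF assms(1)]])
qed

lemma nice_tDCW_safe_return:
  assumes A: "nice_tDCW A" and x: "x \<in> states A" and u: "safe_word A x u"
  shows "\<exists>v. safe_word A (dsteps A x u) v \<and> dsteps A (dsteps A x u) v = x"
proof -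
  have T: "is_tDCW A"
    using A by (rule nice_tDCW_is_tDCW)
  have "(x, dsteps A x u) \<in> (safe_edges A)\<^sup>*"
    using safe_edges_rtrancl_iff[OF T x] u by blast
  moreover have "dsteps A x u \<in> states A"
    using T x by (rule dsteps_in_states)
  ultimately have "(dsteps A x u, x) \<in> (safe_edges A)\<^sup>*"
    using A x unfolding nice_tDCW_def nice_def by simp
  then show ?thesis
    using safe_edges_rtrancl_iff[OF T dsteps_in_states[OF T x]] by blast
qed

lemma drun_iter:
  assumes c: "c \<noteq> []" and cycle: "dsteps A x c = x"
  shows "drun A x c\<^sup>\<omega> (k * length c + j) = drun A x c\<^sup>\<omega> j"
proof (induction k)
  case (Suc k)
  have "drun A x c\<^sup>\<omega> (Suc k * length c + j) = drun A x (c \<frown> c\<^sup>\<omega>) (length c + (k * length c + j))"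
    using iter_unroll[of c] c by (simp add: add.assoc)
  also have "\<dots> = drun A x c\<^sup>\<omega> (k * length c + j)"
    using cycle by (simp only: drun_conc)
  finally show ?case
    using Suc.IH by simp
qed simp

lemma prefix_iter: "c \<noteq> [] \<Longrightarrow> prefix (length c) c\<^sup>\<omega> = c"
  using iter_unroll[of c] by (metis length_greater_0_conv prefix_conc_length)

lemma iter_in_safe_lang:
  assumes c: "c \<noteq> []" and cycle: "dsteps A x c = x" and safe: "safe_word A x c"
  shows "c\<^sup>\<omega> \<in> safe_lang A x"
  unfolding safe_lang_def
proof (intro CollectI allI)
  fix i
  let ?j = "i mod length c"
  have "?j < length c"
    using c by simp
  then have "safe_step A (drun A x c\<^sup>\<omega> ?j) (c\<^sup>\<omega> ?j)"
    using safe safe_word_prefix[of A x "c\<^sup>\<omega>" "length c"] prefix_iter[OF c] by simp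
  moreover have "drun A x c\<^sup>\<omega> i = drun A x c\<^sup>\<omega> ?j"
    using drun_iter[OF c cycle, of "i div length c" ?j] by simp
  moreover have "c\<^sup>\<omega> i = c\<^sup>\<omega> ?j"
    using c by simp
  ultimately show "safe_step A (drun A x c\<^sup>\<omega> i) (c\<^sup>\<omega> i)"
    by simp
qed

lemma iter_notin_state_lang:
  assumes c: "c \<noteq> []" and cycle: "dsteps A x c = x" and unsafe: "\<not> safe_word A x c"
  shows "c\<^sup>\<omega> \<notin> state_lang A x"
proof -
  obtain j where "\<not> safe_step A (drun A x c\<^sup>\<omega> j) (c\<^sup>\<omega> j)"
    using unsafe safe_word_prefix[of A x "c\<^sup>\<omega>" "length c"] prefix_iter[OF c] by auto
  then have "\<not> safe_step A (drun A x c\<^sup>\<omega> (k * length c + j)) (c\<^sup>\<omega> (k * length c + j))" for k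
    using drun_iter[OF c cycle] c by simp
  moreover have "Suc m * length c + j > m" for m
    using c by (cases "length c") auto
  ultimately have "INFM i. \<not> safe_step A (drun A x c\<^sup>\<omega> i) (c\<^sup>\<omega> i)"
    unfolding INFM_nat by blast
  then show ?thesis
    unfolding state_lang_def by simp
qed

lemma safe_cycle_separates_state_lang:
  assumes "safe_word A p c" and "dsteps A p c = p"
    and "\<not> safe_word B q c" and "dsteps B q c = q"
  shows "state_lang A p \<noteq> state_lang B q"
proof -
  have c: "c \<noteq> []"
    using assms(3) by auto
  have "c\<^sup>\<omega> \<in> state_lang A p"
    using subsetD[OF safe_lang_subset_state_lang iter_in_safe_lang[OF c assms(2,1)]] .
  moreover have "c\<^sup>\<omega> \<notin> state_lang B q"
    using iter_notin_state_lang[OF c assms(4,3)] .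
  ultimately show ?thesis
    by blast
qed

lemma safe_lang_nonempty:
  assumes A: "nice_tDCW A" and x: "x \<in> states A" and u: "safe_word A x u" "u \<noteq> []"
  shows "safe_lang A (dsteps A x u) \<noteq> {}"
proof -
  obtain v where v: "safe_word A (dsteps A x u) v" "dsteps A (dsteps A x u) v = x"
    using nice_tDCW_safe_return[OF A x u(1)] by blast
  then have "(v @ u)\<^sup>\<omega> \<in> safe_lang A (dsteps A x u)"
    using u by (intro iter_in_safe_lang) simp_all
  then show ?thesis
    by blast
qed

definition safe_le :: "('s, 'a) tNCW \<Rightarrow> 's \<Rightarrow> ('t, 'a) tNCW \<Rightarrow> 't \<Rightarrow> bool" where
  "safe_le A x B z \<longleftrightarrow> state_lang A x = state_lang B z \<and> safe_lang A x \<subseteq> safe_lang B z"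

definition lang_pair :: "('s, 'a) tNCW \<Rightarrow> 's \<Rightarrow> 'a word set \<times> 'a word set" where
  "lang_pair A x = (state_lang A x, safe_lang A x)"

lemma safe_le_refl [simp]: "safe_le A x A x"
  by (simp add: safe_le_def)

lemma safe_le_trans: "safe_le A x B y \<Longrightarrow> safe_le B y C z \<Longrightarrow> safe_le A x C z"
  by (auto simp: safe_le_def)

lemma lang_pair_eq_iff: "lang_pair A x = lang_pair B z \<longleftrightarrow> safe_le A x B z \<and> safe_le B z A x"
  by (auto simp: lang_pair_def safe_le_def)

lemma safe_le_lang_pair_cong:
  assumes "lang_pair A x = lang_pair A x'" and "lang_pair B z = lang_pair B z'"
  shows "safe_le A x B z \<longleftrightarrow> safe_le A x' B z'"
  using assms by (simp add: lang_pair_def safe_le_def)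

text \<open>A safe word from x can be completed to a safe cycle, so its continuation has a nonempty
  safe language; this is what transfers safety of the word from x to any z above x.\<close>
lemma safe_le_dsteps:
  assumes A: "nice_tDCW A" and x: "x \<in> states A" and le: "safe_le A x B z"
    and u: "safe_word A x u"
  shows "safe_word B z u \<and> safe_le A (dsteps A x u) B (dsteps B z u)"
proof (cases "u = []")
  case False
  have *: "safe_word B z u \<and> v \<in> safe_lang B (dsteps B z u)"
    if "v \<in> safe_lang A (dsteps A x u)" for v
  proof -
    have "u \<frown> v \<in> safe_lang A x"
      using that u by (simp add: safe_lang_conc)
    then have "u \<frown> v \<in> safe_lang B z"
      using le by (auto simp: safe_le_def)
    then show ?thesis
      by (simp add: safe_lang_conc)
  qed
  then have "safe_word B z u"
    using safe_lang_nonempty[OF A x u False] by blast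
  moreover have "state_lang A (dsteps A x u) = state_lang B (dsteps B z u)"
    using le state_lang_dsteps_cong[of A x B z u] unfolding safe_le_def by blast
  moreover have "safe_lang A (dsteps A x u) \<subseteq> safe_lang B (dsteps B z u)"
    using * by blast
  ultimately show ?thesis
    unfolding safe_le_def by simp
qed (use le in simp)

corollary safe_le_dstep:
  assumes "nice_tDCW A" and "x \<in> states A" and "safe_le A x B z" and "safe_step A x \<sigma>"
  shows "safe_step B z \<sigma> \<and> safe_le A (dstep A x \<sigma>) B (dstep B z \<sigma>)"
  using safe_le_dsteps[OF assms(1-3), of "[\<sigma>]"] assms(4) by simp

lemma safe_le_along_runs:
  assumes A: "nice_tDCW A" and p: "\<And>i. p i \<in> states A"
    and p_safe: "\<And>i. safe_step A (p i) (w i)"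
    and p_step: "\<And>i. lang_pair A (p (Suc i)) = lang_pair A (dstep A (p i) (w i))"
    and q_step: "\<And>i. safe_step B (q i) (w i) \<Longrightarrow>
                      lang_pair B (q (Suc i)) = lang_pair B (dstep B (q i) (w i))"
    and le0: "safe_le A (p 0) B (q 0)"
  shows "safe_le A (p i) B (q i) \<and> safe_step B (q i) (w i)"
proof (induction i)
  case 0
  show ?case
    using le0 safe_le_dstep[OF A p le0 p_safe] by simp
next
  case (Suc i)
  then have "safe_le A (p i) B (q i)" and "safe_step B (q i) (w i)"
    by simp_all
  then have le: "safe_le A (p (Suc i)) B (q (Suc i))"
    using safe_le_dstep[OF A p \<open>safe_le A (p i) B (q i)\<close> p_safe]
      safe_le_lang_pair_cong[OF p_step q_step] by simp
  then show ?case
    using safe_le_dstep[OF A p le p_safe] by simp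
qed

definition safe_reach :: "('s, 'a) tNCW \<Rightarrow> 's \<Rightarrow> 's set" where
  "safe_reach A x = {dsteps A x u | u. safe_word A x u}"

definition comp_le :: "('s, 'a) tNCW \<Rightarrow> 's \<Rightarrow> ('t, 'a) tNCW \<Rightarrow> 't \<Rightarrow> bool" where
  "comp_le A x B z \<longleftrightarrow> (\<forall>x' \<in> safe_reach A x. \<exists>z' \<in> safe_reach B z. safe_le A x' B z')"

definition comps_maximal :: "('s, 'a) tNCW \<Rightarrow> bool" where
  "comps_maximal A \<longleftrightarrow> (\<forall>x \<in> states A. \<forall>z \<in> states A. comp_le A x A z \<longrightarrow> comp_le A z A x)"

definition safe_minimal :: "('s, 'a) tNCW \<Rightarrow> bool" where
  "safe_minimal A \<longleftrightarrow> inj_on (lang_pair A) (states A)"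

lemma safe_reach_refl: "x \<in> safe_reach A x"
  unfolding safe_reach_def by (intro CollectI exI[of _ "[]"]) simp

lemma safe_reach_in_states:
  "is_tDCW A \<Longrightarrow> x \<in> states A \<Longrightarrow> y \<in> safe_reach A x \<Longrightarrow> y \<in> states A"
  unfolding safe_reach_def by (auto simp: dsteps_in_states)

lemma safe_reach_eq:
  assumes A: "nice_tDCW A" and x: "x \<in> states A" and y: "y \<in> safe_reach A x"
  shows "safe_reach A y = safe_reach A x"
proof -
  obtain u where u: "safe_word A x u" "y = dsteps A x u"
    using y unfolding safe_reach_def by blast
  obtain v where v: "safe_word A y v" "dsteps A y v = x"
    using nice_tDCW_safe_return[OF A x u(1)] u(2) by blast
  show ?thesis
  proof (intro equalityI subsetI)
    fix t
    assume "t \<in> safe_reach A y"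
    then obtain u' where "safe_word A y u'" "t = dsteps A y u'"
      unfolding safe_reach_def by blast
    then show "t \<in> safe_reach A x"
      unfolding safe_reach_def using u by (intro CollectI exI[of _ "u @ u'"]) simp
  next
    fix t
    assume "t \<in> safe_reach A x"
    then obtain u' where "safe_word A x u'" "t = dsteps A x u'"
      unfolding safe_reach_def by blast
    then show "t \<in> safe_reach A y"
      unfolding safe_reach_def using v by (intro CollectI exI[of _ "v @ u'"]) simp
  qed
qed

lemma comp_le_refl: "comp_le A x A x"
  unfolding comp_le_def by (intro ballI bexI[of _ x' for x']) simp_all

lemma comp_le_trans:
  assumes xy: "comp_le A x B y" and yz: "comp_le B y C z"
  shows "comp_le A x C z"
  unfolding comp_le_def
proof
  fix x'
  assume "x' \<in> safe_reach A x"
  then obtain y' where y': "y' \<in> safe_reach B y" "safe_le A x' B y'"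
    using xy unfolding comp_le_def by auto
  then obtain z' where z': "z' \<in> safe_reach C z" "safe_le B y' C z'"
    using yz unfolding comp_le_def by auto
  have "safe_le A x' C z'"
    using y'(2) z'(2) by (rule safe_le_trans)
  then show "\<exists>z' \<in> safe_reach C z. safe_le A x' C z'"
    using z'(1) by auto
qed

lemma safe_le_imp_comp_le:
  assumes A: "nice_tDCW A" and x: "x \<in> states A" and le: "safe_le A x B z"
  shows "comp_le A x B z"
  unfolding comp_le_def
proof
  fix x'
  assume "x' \<in> safe_reach A x"
  then obtain u where u: "safe_word A x u" "x' = dsteps A x u"
    unfolding safe_reach_def by blast
  then have "dsteps B z u \<in> safe_reach B z" "safe_le A x' B (dsteps B z u)"
    using safe_le_dsteps[OF A x le u(1)] unfolding safe_reach_def by auto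
  then show "\<exists>z' \<in> safe_reach B z. safe_le A x' B z'"
    by blast
qed

lemma comp_le_safe_reach_left:
  "nice_tDCW A \<Longrightarrow> x \<in> states A \<Longrightarrow> y \<in> safe_reach A x \<Longrightarrow> comp_le A y B z \<longleftrightarrow> comp_le A x B z"
  using safe_reach_eq[of A x y] unfolding comp_le_def by simp

lemma comp_le_safe_reach_right:
  "nice_tDCW B \<Longrightarrow> z \<in> states B \<Longrightarrow> y \<in> safe_reach B z \<Longrightarrow> comp_le A x B y \<longleftrightarrow> comp_le A x B z"
  using safe_reach_eq[of B z y] unfolding comp_le_def by simp

lemma lang_pair_eq_dsteps:
  assumes A: "nice_tDCW A" and B: "nice_tDCW B" and x: "x \<in> states A" and z: "z \<in> states B"
    and eq: "lang_pair A x = lang_pair B z" and u: "safe_word A x u"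
  shows "lang_pair A (dsteps A x u) = lang_pair B (dsteps B z u)"
proof -
  have le: "safe_le A x B z" "safe_le B z A x"
    using eq by (simp_all add: lang_pair_eq_iff)
  have "safe_word B z u" "safe_le A (dsteps A x u) B (dsteps B z u)"
    using safe_le_dsteps[OF A x le(1) u] by simp_all
  moreover have "safe_le B (dsteps B z u) A (dsteps A x u)"
    using safe_le_dsteps[OF B z le(2) \<open>safe_word B z u\<close>] by simp
  ultimately show ?thesis
    by (simp add: lang_pair_eq_iff)
qed

section \<open>Two nice deterministic automata for the same language\<close>

lemma finite_preorder_has_maximal:
  assumes fin: "finite S" and ne: "S \<noteq> {}" and tr: "transp_on S R"
  shows "\<exists>m \<in> S. \<forall>b \<in> S. R m b \<longrightarrow> R b m"
proof -
  define Q where "Q = {(b, a). a \<in> S \<and> b \<in> S \<and> R a b \<and> \<not> R b a}"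
  have "Q \<subseteq> S \<times> S"
    unfolding Q_def by blast
  then have "finite Q"
    using fin finite_subset by blast
  moreover have "Relation.trans Q"
  proof (rule transI)
    fix a b c
    assume "(a, b) \<in> Q" and "(b, c) \<in> Q"
    then have "a \<in> S" "b \<in> S" "c \<in> S" "R b a" "\<not> R a b" "R c b" "\<not> R b c"
      unfolding Q_def by simp_all
    then show "(a, c) \<in> Q"
      unfolding Q_def using transp_onD[OF tr] by blast
  qed
  moreover have "irrefl Q"
    unfolding Q_def irrefl_def by blast
  ultimately have "wf Q"
    by (simp add: wf_iff_acyclic_if_finite acyclic_irrefl)
  obtain s where "s \<in> S"
    using ne by blast
  then obtain m where "m \<in> S" "\<And>b. (b, m) \<in> Q \<Longrightarrow> b \<notin> S"
    using wfE_min[OF \<open>wf Q\<close>] by blast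
  then show ?thesis
    unfolding Q_def by blast
qed

lemma funpow_repeats:
  assumes fin: "finite Q" and q0: "q0 \<in> Q" and f: "\<And>q. q \<in> Q \<Longrightarrow> f q \<in> Q"
  obtains a b where "a < b" and "(f ^^ a) q0 = (f ^^ b) q0"
proof -
  have "(f ^^ k) q0 \<in> Q" for k
    by (induction k) (simp_all add: q0 f)
  then have "finite (range (\<lambda>k. (f ^^ k) q0))"
    using fin by (meson finite_subset image_subset_iff)
  then have "\<not> inj (\<lambda>k. (f ^^ k) q0)"
    using finite_imageD infinite_UNIV_nat by blast
  then show thesis
    using that unfolding inj_def by (metis linorder_neqE_nat)
qed

text \<open>The escaping cycles are chained along the orbit of q0 until it repeats.\<close>
lemma unsafe_cycle_of_escapes:
  fixes A :: "('s, 'a) tNCW" and B :: "('t, 'a) tNCW"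
  assumes fin: "finite Q" and q0: "q0 \<in> Q"
    and escape: "\<And>q. q \<in> Q \<Longrightarrow> \<exists>v. safe_word A p v \<and> dsteps A p v = p \<and>
                                      \<not> safe_word B q v \<and> dsteps B q v \<in> Q"
  obtains q c where "q \<in> Q" "safe_word A p c" "dsteps A p c = p"
    "\<not> safe_word B q c" "dsteps B q c = q"
proof -
  define g where "g q = (SOME v. safe_word A p v \<and> dsteps A p v = p \<and>
                                   \<not> safe_word B q v \<and> dsteps B q v \<in> Q)" for q
  have g: "safe_word A p (g q) \<and> dsteps A p (g q) = p \<and> \<not> safe_word B q (g q) \<and> dsteps B q (g q) \<in> Q"
    if "q \<in> Q" for q
    unfolding g_def using someI_ex[OF escape[OF that]] .
  define s where "s k = ((\<lambda>q. dsteps B q (g q)) ^^ k) q0" for k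
  have sQ: "s k \<in> Q" for k
    by (induction k) (simp_all add: s_def q0 g)
  have s_Suc: "s (Suc k) = dsteps B (s k) (g (s k))" for k
    by (simp add: s_def)
  obtain a b where ab: "a < b" "s a = s b"
    using funpow_repeats[OF fin q0, of "\<lambda>q. dsteps B q (g q)"] g unfolding s_def by blast
  have walk: "\<exists>V. safe_word A p V \<and> dsteps A p V = p \<and>
                 \<not> safe_word B (s a) V \<and> dsteps B (s a) V = s (a + Suc n)" for n
  proof (induction n)
    case 0
    show ?case
      using g[OF sQ[of a]] s_Suc[of a] by (intro exI[of _ "g (s a)"]) simp
  next
    case (Suc n)
    then obtain V where V: "safe_word A p V" "dsteps A p V = p" "\<not> safe_word B (s a) V"
      "dsteps B (s a) V = s (a + Suc n)"
      by blast
    show ?case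
      using V g[OF sQ[of "a + Suc n"]] s_Suc[of "a + Suc n"]
      by (intro exI[of _ "V @ g (s (a + Suc n))"]) simp
  qed
  obtain V where "safe_word A p V" "dsteps A p V = p" "\<not> safe_word B (s a) V"
    "dsteps B (s a) V = s a"
    using walk[of "b - Suc a"] ab by auto
  then show thesis
    using that sQ by blast
qed

lemma ex_escaping_safe_cycle:
  assumes A: "nice_tDCW A" and p: "p \<in> states A"
    and L: "state_lang B q = state_lang A p" and not_le: "\<not> safe_le A p B q"
  shows "\<exists>v. safe_word A p v \<and> dsteps A p v = p \<and> \<not> safe_word B q v \<and>
             state_lang B (dsteps B q v) = state_lang A p"
proof -
  have "\<not> safe_lang A p \<subseteq> safe_lang B q"
    using L not_le unfolding safe_le_def by simp
  then obtain w i where w: "w \<in> safe_lang A p" and i: "\<not> safe_step B (drun B q w i) (w i)"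
    unfolding safe_lang_def by blast
  have "safe_word A p (prefix (Suc i) w)"
    using w unfolding safe_lang_def safe_word_prefix by blast
  moreover have "\<not> safe_word B q (prefix (Suc i) w)"
    using i unfolding safe_word_prefix by blast
  ultimately obtain x where x: "safe_word A p x" "\<not> safe_word B q x"
    by blast
  obtain v where v: "safe_word A (dsteps A p x) v" "dsteps A (dsteps A p x) v = p"
    using nice_tDCW_safe_return[OF A p x(1)] by blast
  have "state_lang B (dsteps B q (x @ v)) = state_lang A (dsteps A p (x @ v))"
    using state_lang_dsteps_cong[OF L] .
  then show ?thesis
    using x v by (intro exI[of _ "x @ v"]) simp
qed

text \<open>Otherwise every state of B equivalent to p can be left by a safe cycle of p that is
  unsafe in B and leads back to such a state; pumping one of these cycles separates the
  languages.\<close>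
lemma ex_safe_le_state:
  assumes A: "nice_tDCW A" and B: "nice_tDCW B" and L: "lang A = lang B" and p: "p \<in> states A"
  shows "\<exists>q \<in> states B. safe_le A p B q"
proof (rule ccontr)
  assume none: "\<not> ?thesis"
  have TA: "is_tDCW A" and TB: "is_tDCW B"
    using A B by (simp_all add: nice_tDCW_is_tDCW)
  define Q where "Q = {q \<in> states B. state_lang B q = state_lang A p}"
  obtain u where u: "dsteps A (init A) u = p"
    using nice_tDCW_reachable[OF A p] by blast
  have "state_lang A (init A) = state_lang B (init B)"
    using L lang_tDCW[OF TA] lang_tDCW[OF TB] by simp
  then have q0: "dsteps B (init B) u \<in> Q"
    unfolding Q_def using state_lang_dsteps_cong[of A "init A" B "init B" u] u
      dsteps_in_states[OF TB init_in_states[OF TB]] by simp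
  have "finite Q"
    unfolding Q_def using finite_states[OF TB] by simp
  moreover note q0
  moreover have "\<exists>v. safe_word A p v \<and> dsteps A p v = p \<and> \<not> safe_word B q v \<and> dsteps B q v \<in> Q"
    if q: "q \<in> Q" for q
  proof -
    have qS: "q \<in> states B" and "state_lang B q = state_lang A p" and "\<not> safe_le A p B q"
      using none q unfolding Q_def by auto
    then obtain v where "safe_word A p v" "dsteps A p v = p" "\<not> safe_word B q v"
      "state_lang B (dsteps B q v) = state_lang A p"
      using ex_escaping_safe_cycle[OF A p, of B q] by blast
    moreover have "dsteps B q v \<in> states B"
      using dsteps_in_states[OF TB qS] .
    ultimately show ?thesis
      unfolding Q_def by blast
  qed
  ultimately obtain q c where "q \<in> Q" "safe_word A p c" "dsteps A p c = p"
    "\<not> safe_word B q c" "dsteps B q c = q"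
    by (rule unsafe_cycle_of_escapes)
  then show False
    using safe_cycle_separates_state_lang[of A p c B q] unfolding Q_def by simp
qed

lemma ex_lang_pair_eq_state_of_safe_reach:
  assumes A: "nice_tDCW A" and B: "nice_tDCW B" and p: "p \<in> states A"
    and p': "p' \<in> safe_reach A p" and q: "q \<in> states B" and eq: "lang_pair A p' = lang_pair B q"
  shows "\<exists>q' \<in> states B. lang_pair B q' = lang_pair A p"
proof -
  have p'S: "p' \<in> states A"
    using safe_reach_in_states[OF nice_tDCW_is_tDCW[OF A] p p'] .
  have "p \<in> safe_reach A p'"
    using safe_reach_eq[OF A p p'] safe_reach_refl[of p A] by simp
  then obtain u where u: "safe_word A p' u" "dsteps A p' u = p"
    unfolding safe_reach_def by auto
  have "dsteps B q u \<in> states B"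
    using dsteps_in_states[OF nice_tDCW_is_tDCW[OF B] q] .
  moreover have "lang_pair B (dsteps B q u) = lang_pair A p"
    using lang_pair_eq_dsteps[OF A B p'S q eq u(1)] u(2) by simp
  ultimately show ?thesis
    by auto
qed

text \<open>Let m be maximal for safe_le among the states whose safe component dominates that of p.
  Since the component of m is maximal, some p' in the component of p lies above m; passing from
  p' to B and back to A stays above m, so p' and its partner in B are strongly equivalent.\<close>
lemma ex_lang_pair_eq_state:
  assumes A: "nice_tDCW A" and B: "nice_tDCW B" and L: "lang A = lang B"
    and M: "comps_maximal A" and p: "p \<in> states A"
  shows "\<exists>q \<in> states B. lang_pair B q = lang_pair A p"
proof -
  have TA: "is_tDCW A"
    using A by (rule nice_tDCW_is_tDCW)
  define X where "X = {x \<in> states A. comp_le A p A x}"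
  have "finite X"
    unfolding X_def using finite_states[OF TA] by simp
  moreover have "X \<noteq> {}"
    unfolding X_def using p comp_le_refl[of A p] by auto
  moreover have "transp_on X (\<lambda>x y. safe_le A x A y)"
    by (rule transp_onI) (rule safe_le_trans)
  ultimately obtain m where m: "m \<in> X" "\<forall>b \<in> X. safe_le A m A b \<longrightarrow> safe_le A b A m"
    by (rule finite_preorder_has_maximal[THEN bexE])
  have "comp_le A m A p"
    using M m(1) p unfolding comps_maximal_def X_def by simp
  then obtain p' where p': "p' \<in> safe_reach A p" "safe_le A m A p'"
    using safe_reach_refl[of m A] unfolding comp_le_def by auto
  have p'S: "p' \<in> states A"
    using safe_reach_in_states[OF TA p p'(1)] .
  have pp': "comp_le A p A p'"
    using comp_le_safe_reach_right[OF A p p'(1), of A p] comp_le_refl[of A p] by simp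
  obtain q where q: "q \<in> states B" "safe_le A p' B q"
    using ex_safe_le_state[OF A B L p'S] by auto
  obtain a where a: "a \<in> states A" "safe_le B q A a"
    using ex_safe_le_state[OF B A L[symmetric] q(1)] by auto
  have "comp_le A p A a"
    using comp_le_trans[OF comp_le_trans[OF pp' safe_le_imp_comp_le[OF A p'S q(2)]]
        safe_le_imp_comp_le[OF B q(1) a(2)]] .
  then have "a \<in> X"
    unfolding X_def using a(1) by simp
  moreover have "safe_le A m A a"
    using safe_le_trans[OF safe_le_trans[OF p'(2) q(2)] a(2)] .
  ultimately have "safe_le A a A m"
    using m(2) by simp
  then have "safe_le B q A p'"
    using safe_le_trans[OF safe_le_trans[OF a(2)] p'(2)] by simp
  then have "lang_pair A p' = lang_pair B q"
    using q(2) by (simp add: lang_pair_eq_iff)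
  then show ?thesis
    using ex_lang_pair_eq_state_of_safe_reach[OF A B p p'(1) q(1)] by blast
qed

lemma lang_pair_embedding:
  assumes A: "nice_tDCW A" and B: "nice_tDCW B" and L: "lang A = lang B"
    and max: "comps_maximal A" and min: "safe_minimal A"
  obtains \<kappa> where "inj_on \<kappa> (states A)" "\<kappa> ` states A \<subseteq> states B"
    "\<And>p. p \<in> states A \<Longrightarrow> lang_pair B (\<kappa> p) = lang_pair A p"
proof -
  define \<kappa> where "\<kappa> p = (SOME q. q \<in> states B \<and> lang_pair B q = lang_pair A p)" for p
  have \<kappa>: "\<kappa> p \<in> states B \<and> lang_pair B (\<kappa> p) = lang_pair A p" if p: "p \<in> states A" for p
    unfolding \<kappa>_def using ex_lang_pair_eq_state[OF A B L max p] by (rule someI2_bex) simp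
  have "inj_on \<kappa> (states A)"
  proof (rule inj_onI)
    fix p p'
    assume "p \<in> states A" "p' \<in> states A" "\<kappa> p = \<kappa> p'"
    then have "lang_pair A p = lang_pair A p'"
      using \<kappa> by metis
    then show "p = p'"
      using min \<open>p \<in> states A\<close> \<open>p' \<in> states A\<close> by (simp add: safe_minimal_def inj_on_eq_iff)
  qed
  moreover have "\<kappa> ` states A \<subseteq> states B"
    using \<kappa> by blast
  ultimately show thesis
    using that \<kappa> by blast
qed

section \<open>GFG automata from safe covers\<close>

definition GFG_minimal :: "('s, 'a) tNCW \<Rightarrow> bool" where
  "GFG_minimal A \<longleftrightarrow> (\<forall>C :: ('s, 'a) tNCW.
     wf_aut C \<and> is_GFG C \<and> lang C = lang A \<longrightarrow> card (states A) \<le> card (states C))"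

definition safe_cover :: "('s, 'a) tNCW \<Rightarrow> 's set \<Rightarrow> bool" where
  "safe_cover A K \<longleftrightarrow> K \<subseteq> states A \<and>
     (\<forall>x \<in> K. \<forall>\<sigma>. safe_step A x \<sigma> \<longrightarrow> (\<exists>k \<in> K. lang_pair A k = lang_pair A (dstep A x \<sigma>))) \<and>
     (\<forall>y \<in> states A. \<exists>k \<in> K. safe_le A y A k)"

definition cover_trans :: "('s, 'a) tNCW \<Rightarrow> 's set \<Rightarrow> 's \<Rightarrow> 'a \<Rightarrow> 's set" where
  "cover_trans A K x \<sigma> =
     (if safe_step A x \<sigma> then {k \<in> K. lang_pair A k = lang_pair A (dstep A x \<sigma>)}
      else {k \<in> K. state_lang A k = state_lang A (dstep A x \<sigma>)})"

definition cover_aut :: "('s, 'a) tNCW \<Rightarrow> 's set \<Rightarrow> ('s, 'a) tNCW" where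
  "cover_aut A K =
     \<lparr>states = K, init = (SOME k. k \<in> K \<and> safe_le A (init A) A k), trans = cover_trans A K,
      acc = {(x, \<sigma>, k). x \<in> K \<and> k \<in> cover_trans A K x \<sigma> \<and> \<not> safe_step A x \<sigma>}\<rparr>"

text \<open>c is the current state of the strategy and a the state of A after the same prefix. After
  a rejecting transition the strategy resumes from a state of K above a; once the run of A
  stays safe, so does the strategy.\<close>
definition cover_next :: "('s, 'a) tNCW \<Rightarrow> 's set \<Rightarrow> 's \<Rightarrow> 's \<Rightarrow> 'a \<Rightarrow> 's" where
  "cover_next A K c a \<sigma> =
     (if safe_step A c \<sigma> then SOME k. k \<in> cover_trans A K c \<sigma>
      else SOME k. k \<in> K \<and> safe_le A (dstep A a \<sigma>) A k)"

definition cover_strategy :: "('s, 'a) tNCW \<Rightarrow> 's set \<Rightarrow> 'a list \<Rightarrow> 's" where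
  "cover_strategy A K u = fst (foldl (\<lambda>(c, a) \<sigma>. (cover_next A K c a \<sigma>, dstep A a \<sigma>))
                                   (init (cover_aut A K), init A) u)"

lemma cover_strategy_Nil: "cover_strategy A K [] = init (cover_aut A K)"
  by (simp add: cover_strategy_def)

lemma cover_strategy_snoc:
  "cover_strategy A K (u @ [\<sigma>]) = cover_next A K (cover_strategy A K u) (dsteps A (init A) u) \<sigma>"
proof -
  define F where "F = (\<lambda>(c, a) \<sigma>. (cover_next A K c a \<sigma>, dstep A a \<sigma>))"
  have "snd (foldl F (init (cover_aut A K), init A) u) = dsteps A (init A) u"
    by (induction u rule: rev_induct) (simp_all add: F_def split_beta)
  then show ?thesis
    unfolding cover_strategy_def F_def[symmetric] by (simp add: F_def split_beta)
qed

lemma cover_trans_state_lang: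
  "k \<in> cover_trans A K x \<sigma> \<Longrightarrow> k \<in> K \<and> state_lang A k = state_lang A (dstep A x \<sigma>)"
  by (auto simp: cover_trans_def lang_pair_def split: if_splits)

lemma cover_acc_iff:
  "x \<in> K \<Longrightarrow> k \<in> cover_trans A K x \<sigma> \<Longrightarrow> (x, \<sigma>, k) \<in> acc (cover_aut A K) \<longleftrightarrow> \<not> safe_step A x \<sigma>"
  by (simp add: cover_aut_def)

context
  fixes A :: "('s, 'a) tNCW" and K :: "'s set"
  assumes A: "nice_tDCW A" and K: "safe_cover A K"
begin

lemma cover_subset: "K \<subseteq> states A"
  using K by (simp add: safe_cover_def)

lemma cover_above: "y \<in> states A \<Longrightarrow> \<exists>k \<in> K. safe_le A y A k"
  using K by (simp add: safe_cover_def)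

lemma cover_init: "init (cover_aut A K) \<in> K \<and> safe_le A (init A) A (init (cover_aut A K))"
proof -
  have "\<exists>k. k \<in> K \<and> safe_le A (init A) A k"
    using cover_above[OF init_in_states[OF nice_tDCW_is_tDCW[OF A]]] by blast
  from someI_ex[OF this] show ?thesis
    unfolding cover_aut_def by simp
qed

lemma cover_next_in_cover_trans:
  assumes c: "c \<in> K" and a: "a \<in> states A" and L: "state_lang A c = state_lang A a"
  shows "cover_next A K c a \<sigma> \<in> cover_trans A K c \<sigma>"
proof (cases "safe_step A c \<sigma>")
  case True
  then have "cover_trans A K c \<sigma> = {k \<in> K. lang_pair A k = lang_pair A (dstep A c \<sigma>)}"
    by (simp add: cover_trans_def)
  then have "\<exists>k. k \<in> cover_trans A K c \<sigma>"
    using K c True unfolding safe_cover_def by blast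
  from someI_ex[OF this] show ?thesis
    using True by (simp add: cover_next_def)
next
  case False
  have "\<exists>k. k \<in> K \<and> safe_le A (dstep A a \<sigma>) A k"
    using cover_above[OF dstep_in_states[OF nice_tDCW_is_tDCW[OF A] a]] by blast
  from someI_ex[OF this]
  have "cover_next A K c a \<sigma> \<in> K \<and> safe_le A (dstep A a \<sigma>) A (cover_next A K c a \<sigma>)"
    using False by (simp add: cover_next_def)
  moreover have "state_lang A (dstep A a \<sigma>) = state_lang A (dstep A c \<sigma>)"
    using state_lang_dstep_cong[OF L] by simp
  ultimately show ?thesis
    using False by (simp add: cover_trans_def safe_le_def)
qed

lemma wf_cover_aut: "wf_aut (cover_aut A K)"
  unfolding wf_aut_def
proof (intro conjI ballI allI)
  show "finite (states (cover_aut A K))"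
    using cover_subset finite_states[OF nice_tDCW_is_tDCW[OF A]] finite_subset
    by (auto simp: cover_aut_def)
  show "init (cover_aut A K) \<in> states (cover_aut A K)"
    using cover_init by (simp add: cover_aut_def)
  show "acc (cover_aut A K) \<subseteq> Delta (cover_aut A K)"
    by (auto simp: cover_aut_def Delta_def)
next
  fix x \<sigma>
  assume "x \<in> states (cover_aut A K)"
  then have x: "x \<in> K"
    by (simp add: cover_aut_def)
  have "cover_next A K x x \<sigma> \<in> cover_trans A K x \<sigma>"
    using cover_next_in_cover_trans[OF x subsetD[OF cover_subset x] refl] .
  moreover have "cover_trans A K x \<sigma> \<subseteq> K"
    unfolding cover_trans_def by auto
  ultimately show "trans (cover_aut A K) x \<sigma> \<noteq> {}"
    and "trans (cover_aut A K) x \<sigma> \<subseteq> states (cover_aut A K)"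
    by (auto simp: cover_aut_def)
qed

lemma cover_strategy_invariant:
  "cover_strategy A K u \<in> K \<and> state_lang A (cover_strategy A K u) = state_lang A (dsteps A (init A) u)"
proof (induction u rule: rev_induct)
  case Nil
  show ?case
    using cover_init by (simp add: cover_strategy_Nil safe_le_def)
next
  case (snoc \<sigma> u)
  have a: "dsteps A (init A) u \<in> states A"
    using dsteps_in_states[OF nice_tDCW_is_tDCW[OF A] init_in_states[OF nice_tDCW_is_tDCW[OF A]]] .
  have IH: "cover_strategy A K u \<in> K"
    "state_lang A (cover_strategy A K u) = state_lang A (dsteps A (init A) u)"
    using snoc by simp_all
  have "cover_strategy A K (u @ [\<sigma>]) \<in> K \<and>
        state_lang A (cover_strategy A K (u @ [\<sigma>])) = state_lang A (dstep A (cover_strategy A K u) \<sigma>)"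
    unfolding cover_strategy_snoc by (rule cover_trans_state_lang[OF cover_next_in_cover_trans[OF IH(1) a IH(2)]])
  moreover have "state_lang A (dstep A (cover_strategy A K u) \<sigma>) = state_lang A (dsteps A (init A) (u @ [\<sigma>]))"
    using state_lang_dstep_cong[OF IH(2)] by simp
  ultimately show ?case
    by simp
qed

lemma cover_strategy_in_cover_trans:
  "cover_strategy A K (u @ [\<sigma>]) \<in> cover_trans A K (cover_strategy A K u) \<sigma>"
proof -
  have a: "dsteps A (init A) u \<in> states A"
    using dsteps_in_states[OF nice_tDCW_is_tDCW[OF A] init_in_states[OF nice_tDCW_is_tDCW[OF A]]] .
  have inv: "cover_strategy A K u \<in> K \<and>
             state_lang A (cover_strategy A K u) = state_lang A (dsteps A (init A) u)"
    by (rule cover_strategy_invariant)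
  show ?thesis
    unfolding cover_strategy_snoc using cover_next_in_cover_trans[OF conjunct1[OF inv] a conjunct2[OF inv]] .
qed

lemma cover_run_invariant:
  assumes run: "is_run (cover_aut A K) w r"
  shows "r i \<in> K \<and> state_lang A (r i) = state_lang A (drun A (init A) w i)"
proof (induction i)
  case 0
  show ?case
    using run cover_init by (simp add: is_run_def safe_le_def)
next
  case (Suc i)
  have "r (Suc i) \<in> cover_trans A K (r i) (w i)"
    using run by (simp add: is_run_def cover_aut_def)
  then have "r (Suc i) \<in> K \<and> state_lang A (r (Suc i)) = state_lang A (dstep A (r i) (w i))"
    by (rule cover_trans_state_lang)
  then show ?case
    using Suc state_lang_dstep_cong[of A "r i" A "drun A (init A) w i" "w i"] by (simp add: drun_Suc)
qed

lemma lang_cover_aut_subset: "lang (cover_aut A K) \<subseteq> lang A"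
proof
  fix w
  assume "w \<in> lang (cover_aut A K)"
  then obtain r where run: "is_run (cover_aut A K) w r" and acc: "cobuchi_accepting (cover_aut A K) w r"
    unfolding lang_def by blast
  have inv: "r i \<in> K \<and> state_lang A (r i) = state_lang A (drun A (init A) w i)" for i
    using cover_run_invariant[OF run] .
  have r_step: "r (Suc i) \<in> cover_trans A K (r i) (w i)" for i
    using run by (simp add: is_run_def cover_aut_def)
  have "MOST i. (r i, w i, r (Suc i)) \<notin> acc (cover_aut A K)"
    using acc by (simp add: cobuchi_accepting_def MOST_iff_cofinite)
  then obtain N where "\<forall>i \<ge> N. (r i, w i, r (Suc i)) \<notin> acc (cover_aut A K)"
    unfolding MOST_nat_le by blast
  then have N: "safe_step A (r i) (w i)" if "i \<ge> N" for i
    using cover_acc_iff[OF conjunct1[OF inv] r_step] that by simp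
  have p_in: "r (N + i) \<in> states A" for i
    using inv[of "N + i"] cover_subset by auto
  have p_safe: "safe_step A (r (N + i)) (suffix N w i)" for i
    using N by simp
  have p_step: "lang_pair A (r (N + Suc i)) = lang_pair A (dstep A (r (N + i)) (suffix N w i))" for i
    using r_step[of "N + i"] N[of "N + i"] by (simp add: cover_trans_def)
  have q_step: "lang_pair A (drun A (r N) (suffix N w) (Suc i)) =
                lang_pair A (dstep A (drun A (r N) (suffix N w) i) (suffix N w i))" for i
    by (simp add: drun_Suc)
  have "safe_le A (r (N + i)) A (drun A (r N) (suffix N w) i) \<and>
        safe_step A (drun A (r N) (suffix N w) i) (suffix N w i)" for i
    using safe_le_along_runs[where p = "\<lambda>i. r (N + i)" and q = "drun A (r N) (suffix N w)",
        OF A p_in p_safe p_step q_step] by simp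
  then have "suffix N w \<in> safe_lang A (r N)"
    unfolding safe_lang_def by blast
  then have "suffix N w \<in> state_lang A (drun A (init A) w N)"
    using subsetD[OF safe_lang_subset_state_lang[of A "r N"]] inv[of N] by simp
  then show "w \<in> lang A"
    using state_lang_suffix[of w A "init A" N] lang_tDCW[OF nice_tDCW_is_tDCW[OF A]] by simp
qed

lemma cover_strategy_eventually_safe:
  assumes w: "w \<in> lang A"
  shows "\<exists>M. \<forall>i \<ge> M. safe_step A (cover_strategy A K (prefix i w)) (w i)"
proof -
  have T: "is_tDCW A"
    using A by (rule nice_tDCW_is_tDCW)
  define c where "c i = cover_strategy A K (prefix i w)" for i
  let ?a = "drun A (init A) w"
  have a: "?a i \<in> states A" for i
    using drun_in_states[OF T init_in_states[OF T]] .
  obtain N where N: "\<And>i. i \<ge> N \<Longrightarrow> safe_step A (?a i) (w i)"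
    using w lang_tDCW[OF T] unfolding state_lang_def MOST_nat_le by blast
  show ?thesis
  proof (cases "\<exists>j \<ge> N. \<not> safe_step A (c j) (w j)")
    case False
    then show ?thesis
      unfolding c_def by blast
  next
    case True
    then obtain j where j: "j \<ge> N" "\<not> safe_step A (c j) (w j)"
      by blast
    have "\<exists>k. k \<in> K \<and> safe_le A (?a (Suc j)) A k"
      using cover_above[OF a[of "Suc j"]] by blast
    from someI_ex[OF this]
    have le0: "safe_le A (?a (Suc j + 0)) A (c (Suc j + 0))"
      using j(2) by (simp add: c_def drun_def cover_strategy_snoc cover_next_def)
    have p_safe: "safe_step A (?a (Suc j + i)) (suffix (Suc j) w i)" for i
      using N j(1) by simp
    have p_step: "lang_pair A (?a (Suc j + Suc i)) =
                  lang_pair A (dstep A (?a (Suc j + i)) (suffix (Suc j) w i))" for i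
      by (simp add: drun_Suc)
    have q_step: "lang_pair A (c (Suc j + Suc i)) =
                  lang_pair A (dstep A (c (Suc j + i)) (suffix (Suc j) w i))"
      if "safe_step A (c (Suc j + i)) (suffix (Suc j) w i)" for i
      using cover_strategy_in_cover_trans[of "prefix (Suc j + i) w" "w (Suc j + i)"] that
      by (simp add: c_def cover_trans_def)
    have "safe_le A (?a (Suc j + i)) A (c (Suc j + i)) \<and> safe_step A (c (Suc j + i)) (suffix (Suc j) w i)" for i
      using safe_le_along_runs[where p = "\<lambda>i. ?a (Suc j + i)" and q = "\<lambda>i. c (Suc j + i)",
          OF A a p_safe p_step q_step le0] .
    then show ?thesis
      unfolding c_def by (metis le_add_diff_inverse suffix_nth)
  qed
qed

lemma cover_strategy_accepting:
  assumes w: "w \<in> lang A"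
  shows "cobuchi_accepting (cover_aut A K) w (\<lambda>i. cover_strategy A K (prefix i w))"
proof -
  define c where "c i = cover_strategy A K (prefix i w)" for i
  have cK: "c i \<in> K" for i
    using cover_strategy_invariant[of "prefix i w"] unfolding c_def by simp
  have c_trans: "c (Suc i) \<in> cover_trans A K (c i) (w i)" for i
    using cover_strategy_in_cover_trans[of "prefix i w" "w i"] unfolding c_def by simp
  obtain M where "\<forall>i \<ge> M. safe_step A (c i) (w i)"
    using cover_strategy_eventually_safe[OF w] unfolding c_def by blast
  then have "\<forall>i \<ge> M. (c i, w i, c (Suc i)) \<notin> acc (cover_aut A K)"
    using cover_acc_iff[OF cK c_trans] by simp
  then have "MOST i. (c i, w i, c (Suc i)) \<notin> acc (cover_aut A K)"
    unfolding MOST_nat_le by blast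
  then show ?thesis
    unfolding cobuchi_accepting_def c_def by (simp add: MOST_iff_cofinite)
qed

lemma cover_aut_GFG: "is_GFG (cover_aut A K) \<and> lang (cover_aut A K) = lang A"
proof -
  let ?C = "cover_aut A K" and ?f = "cover_strategy A K"
  have Delta: "(?f u, \<sigma>, ?f (u @ [\<sigma>])) \<in> Delta ?C" for u \<sigma>
    using cover_strategy_in_cover_trans cover_strategy_invariant
    by (simp add: Delta_def cover_aut_def)
  have "is_run ?C w (\<lambda>i. ?f (prefix i w))" for w
    using Delta unfolding is_run_def Delta_def by (simp add: cover_strategy_Nil)
  then have "lang A \<subseteq> lang ?C"
    using cover_strategy_accepting unfolding lang_def by blast
  then have L: "lang ?C = lang A"
    using lang_cover_aut_subset by blast
  have "is_GFG ?C"
    unfolding is_GFG_def prefix_word_eq using Delta cover_strategy_accepting L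
    by (intro exI[of _ ?f]) (simp add: cover_strategy_Nil)
  with L show ?thesis
    by simp
qed

end

lemma GFG_minimal_card_le_cover:
  assumes "nice_tDCW A" and "GFG_minimal A" and "safe_cover A K"
  shows "card (states A) \<le> card K"
proof -
  have "wf_aut (cover_aut A K)" "is_GFG (cover_aut A K)" "lang (cover_aut A K) = lang A"
    using wf_cover_aut[OF assms(1,3)] cover_aut_GFG[OF assms(1,3)] by simp_all
  then have "card (states A) \<le> card (states (cover_aut A K))"
    using assms(2) unfolding GFG_minimal_def by blast
  then show ?thesis
    by (simp add: cover_aut_def)
qed

section \<open>Structure of minimal nice automata\<close>

definition maximal_states :: "('s, 'a) tNCW \<Rightarrow> 's set" where
  "maximal_states A = {x \<in> states A. \<forall>z \<in> states A. comp_le A x A z \<longrightarrow> comp_le A z A x}"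

lemma maximal_states_safe_reach:
  assumes A: "nice_tDCW A" and x: "x \<in> maximal_states A" and y: "y \<in> safe_reach A x"
  shows "y \<in> maximal_states A"
proof -
  have xS: "x \<in> states A"
    using x by (simp add: maximal_states_def)
  have yz: "comp_le A y A z \<longleftrightarrow> comp_le A x A z" and zy: "comp_le A z A y \<longleftrightarrow> comp_le A z A x" for z
    using comp_le_safe_reach_left[OF A xS y, of A z] comp_le_safe_reach_right[OF A xS y, of A z] by simp_all
  show ?thesis
    using x safe_reach_in_states[OF nice_tDCW_is_tDCW[OF A] xS y]
    unfolding maximal_states_def by (simp add: yz zy)
qed

lemma ex_maximal_state_above:
  assumes A: "nice_tDCW A" and x: "x \<in> states A"
  shows "\<exists>k \<in> maximal_states A. safe_le A x A k"
proof -
  define S where "S = {z \<in> states A. comp_le A x A z}"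
  have "finite S"
    unfolding S_def using finite_states[OF nice_tDCW_is_tDCW[OF A]] by simp
  moreover have "S \<noteq> {}"
    unfolding S_def using x comp_le_refl[of A x] by auto
  moreover have "transp_on S (\<lambda>a b. comp_le A a A b)"
    by (rule transp_onI) (rule comp_le_trans)
  ultimately obtain m where m: "m \<in> S" "\<forall>b \<in> S. comp_le A m A b \<longrightarrow> comp_le A b A m"
    by (rule finite_preorder_has_maximal[THEN bexE])
  have xm: "comp_le A x A m"
    using m(1) by (simp add: S_def)
  have "m \<in> maximal_states A"
    unfolding maximal_states_def
  proof (intro CollectI conjI ballI impI)
    show "m \<in> states A"
      using m(1) by (simp add: S_def)
  next
    fix z
    assume "z \<in> states A" and "comp_le A m A z"
    then have "z \<in> S"
      unfolding S_def using comp_le_trans[OF xm, of A z] by simp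
    then show "comp_le A z A m"
      using m(2) \<open>comp_le A m A z\<close> by simp
  qed
  moreover obtain m' where "m' \<in> safe_reach A m" "safe_le A x A m'"
    using xm safe_reach_refl[of x A] unfolding comp_le_def by auto
  ultimately show ?thesis
    using maximal_states_safe_reach[OF A] by blast
qed

lemma safe_cover_maximal_representatives:
  assumes A: "nice_tDCW A"
    and rep: "\<And>P. P \<in> lang_pair A ` maximal_states A \<Longrightarrow>
                   rep P \<in> maximal_states A \<and> lang_pair A (rep P) = P"
  shows "safe_cover A (rep ` lang_pair A ` maximal_states A)"
proof -
  let ?M = "maximal_states A" and ?K = "rep ` lang_pair A ` maximal_states A"
  have K_sub: "?K \<subseteq> ?M"
  proof
    fix k
    assume "k \<in> ?K"
    then obtain P where "P \<in> lang_pair A ` ?M" "k = rep P"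
      by blast
    then show "k \<in> ?M"
      using rep by simp
  qed
  have rep_above: "\<exists>k \<in> ?K. lang_pair A k = lang_pair A m" if "m \<in> ?M" for m
  proof
    show "rep (lang_pair A m) \<in> ?K"
      using that by blast
    show "lang_pair A (rep (lang_pair A m)) = lang_pair A m"
      using rep that by blast
  qed
  have "?K \<subseteq> states A"
    using K_sub by (auto simp: maximal_states_def)
  moreover have "\<exists>k \<in> ?K. lang_pair A k = lang_pair A (dstep A x \<sigma>)"
    if x: "x \<in> ?K" and s: "safe_step A x \<sigma>" for x \<sigma>
  proof -
    have "dstep A x \<sigma> \<in> safe_reach A x"
      unfolding safe_reach_def using s by (intro CollectI exI[of _ "[\<sigma>]"]) simp
    then have "dstep A x \<sigma> \<in> ?M"
      using maximal_states_safe_reach[OF A] x K_sub by blast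
    then show ?thesis
      by (rule rep_above)
  qed
  moreover have "\<exists>k \<in> ?K. safe_le A y A k" if y: "y \<in> states A" for y
  proof -
    obtain m where m: "m \<in> ?M" "safe_le A y A m"
      using ex_maximal_state_above[OF A y] by blast
    then obtain k where "k \<in> ?K" "lang_pair A k = lang_pair A m"
      using rep_above by blast
    then show ?thesis
      using m(2) safe_le_lang_pair_cong[of A y y A k m] by auto
  qed
  ultimately show ?thesis
    unfolding safe_cover_def by simp
qed

lemma ex_safe_cover_maximal:
  assumes A: "nice_tDCW A"
  obtains K where "safe_cover A K" and "card K \<le> card (lang_pair A ` maximal_states A)"
proof -
  let ?M = "maximal_states A"
  define rep where "rep P = (SOME k. k \<in> ?M \<and> lang_pair A k = P)" for P
  have rep: "rep P \<in> ?M \<and> lang_pair A (rep P) = P" if P: "P \<in> lang_pair A ` ?M" for P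
  proof -
    obtain m where "m \<in> ?M" "P = lang_pair A m"
      using P by blast
    then have "m \<in> ?M \<and> lang_pair A m = P"
      by simp
    from someI[of "\<lambda>k. k \<in> ?M \<and> lang_pair A k = P", OF this] show ?thesis
      unfolding rep_def .
  qed
  have "?M \<subseteq> states A"
    by (auto simp: maximal_states_def)
  then have "finite (lang_pair A ` ?M)"
    using finite_states[OF nice_tDCW_is_tDCW[OF A]] finite_subset by blast
  then show thesis
    using that[OF safe_cover_maximal_representatives[OF A rep]] by (simp add: card_image_le)
qed

text \<open>The maximal states, one for each class of strongly equivalent states, form a safe cover;
  minimality therefore forces all states to be maximal and the classes to be singletons.\<close>
theorem GFG_minimal_imp_comps_maximal_safe_minimal:
  assumes A: "nice_tDCW A" and min: "GFG_minimal A"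
  shows "comps_maximal A \<and> safe_minimal A"
proof -
  let ?M = "maximal_states A"
  have fin: "finite (states A)"
    using finite_states[OF nice_tDCW_is_tDCW[OF A]] .
  have M_sub: "?M \<subseteq> states A"
    by (auto simp: maximal_states_def)
  have fin_M: "finite ?M"
    using fin M_sub finite_subset by blast
  obtain K where K: "safe_cover A K" "card K \<le> card (lang_pair A ` ?M)"
    using ex_safe_cover_maximal[OF A] by blast
  have "card (states A) \<le> card K"
    using GFG_minimal_card_le_cover[OF A min K(1)] .
  moreover have "card (lang_pair A ` ?M) \<le> card ?M"
    using fin_M by (simp add: card_image_le)
  moreover have "card ?M \<le> card (states A)"
    using card_mono[OF fin M_sub] .
  ultimately have card_M: "card ?M = card (states A)" and card_img: "card (lang_pair A ` ?M) = card ?M"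
    using K(2) by linarith+
  have M_eq: "?M = states A"
    using card_subset_eq[OF fin M_sub card_M] .
  have "comps_maximal A"
    unfolding comps_maximal_def
  proof (intro ballI impI)
    fix x z
    assume "x \<in> states A" "z \<in> states A" "comp_le A x A z"
    moreover have "x \<in> ?M"
      using M_eq \<open>x \<in> states A\<close> by simp
    ultimately show "comp_le A z A x"
      by (simp add: maximal_states_def)
  qed
  moreover have "safe_minimal A"
    using eq_card_imp_inj_on[OF fin_M card_img] M_eq by (simp add: safe_minimal_def)
  ultimately show ?thesis
    by simp
qed

section \<open>Renaming states\<close>

lemma run_in_states: "wf_aut X \<Longrightarrow> is_run X w r \<Longrightarrow> r i \<in> states X"
  by (induction i) (auto simp: wf_aut_def is_run_def)

definition rename_aut :: "('s \<Rightarrow> 't) \<Rightarrow> ('s, 'a) tNCW \<Rightarrow> ('t, 'a) tNCW" where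
  "rename_aut h X =
     \<lparr>states = h ` states X, init = h (init X),
      trans = (\<lambda>q \<sigma>. h ` trans X (inv_into (states X) h q) \<sigma>),
      acc = (\<lambda>(a, \<sigma>, b). (h a, \<sigma>, h b)) ` acc X\<rparr>"

context
  fixes h :: "'s \<Rightarrow> 't" and X :: "('s, 'a) tNCW"
  assumes wf: "wf_aut X" and inj: "inj_on h (states X)"
begin

lemma trans_rename_aut: "a \<in> states X \<Longrightarrow> trans (rename_aut h X) (h a) \<sigma> = h ` trans X a \<sigma>"
  using inj by (simp add: rename_aut_def)

lemma trans_subset_states: "a \<in> states X \<Longrightarrow> trans X a \<sigma> \<subseteq> states X"
  using wf by (simp add: wf_aut_def)

lemma acc_rename_aut_iff:
  assumes a: "a \<in> states X" and b: "b \<in> states X"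
  shows "(h a, \<sigma>, h b) \<in> acc (rename_aut h X) \<longleftrightarrow> (a, \<sigma>, b) \<in> acc X"
proof
  assume "(h a, \<sigma>, h b) \<in> acc (rename_aut h X)"
  then obtain a' b' where t: "(a', \<sigma>, b') \<in> acc X" "h a = h a'" "h b = h b'"
    by (auto simp: rename_aut_def)
  then have "a' \<in> states X" "b' \<in> states X"
    using wf trans_subset_states unfolding wf_aut_def Delta_def by blast+
  then have "a' = a" "b' = b"
    using inj a b t(2,3) by (simp_all add: inj_on_eq_iff)
  then show "(a, \<sigma>, b) \<in> acc X"
    using t(1) by simp
next
  assume "(a, \<sigma>, b) \<in> acc X"
  then show "(h a, \<sigma>, h b) \<in> acc (rename_aut h X)"
    unfolding rename_aut_def by (simp add: rev_image_eqI[of "(a, \<sigma>, b)"])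
qed

lemma Delta_rename_aut:
  assumes "(a, \<sigma>, b) \<in> Delta X"
  shows "(h a, \<sigma>, h b) \<in> Delta (rename_aut h X)"
proof -
  have "a \<in> states X" "b \<in> trans X a \<sigma>"
    using assms by (simp_all add: Delta_def)
  then show ?thesis
    using trans_rename_aut[of a \<sigma>] by (simp add: Delta_def rename_aut_def)
qed

lemma wf_rename_aut: "wf_aut (rename_aut h X)"
  unfolding wf_aut_def
proof (intro conjI ballI allI)
  show "finite (states (rename_aut h X))" and "init (rename_aut h X) \<in> states (rename_aut h X)"
    using wf by (simp_all add: wf_aut_def rename_aut_def)
next
  fix q \<sigma>
  assume "q \<in> states (rename_aut h X)"
  then obtain a where a: "a \<in> states X" "q = h a"
    by (auto simp: rename_aut_def)
  then have "trans (rename_aut h X) q \<sigma> = h ` trans X a \<sigma>"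
    using trans_rename_aut by simp
  moreover have "trans X a \<sigma> \<noteq> {}" and "trans X a \<sigma> \<subseteq> states X"
    using wf a(1) by (simp_all add: wf_aut_def)
  ultimately show "trans (rename_aut h X) q \<sigma> \<noteq> {}"
    and "trans (rename_aut h X) q \<sigma> \<subseteq> states (rename_aut h X)"
    by (auto simp: rename_aut_def)
next
  show "acc (rename_aut h X) \<subseteq> Delta (rename_aut h X)"
    using wf Delta_rename_aut by (auto simp: wf_aut_def rename_aut_def)
qed

lemma run_rename_aut_iff:
  assumes r: "\<And>i. r i \<in> states X"
  shows "is_run (rename_aut h X) w (h \<circ> r) \<longleftrightarrow> is_run X w r"
proof -
  have "h (r 0) = h (init X) \<longleftrightarrow> r 0 = init X"
    using inj r wf by (simp add: inj_on_eq_iff wf_aut_def)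
  moreover have "h (r (Suc i)) \<in> h ` trans X (r i) (w i) \<longleftrightarrow> r (Suc i) \<in> trans X (r i) (w i)" for i
    using inj r trans_subset_states[OF r] by (simp add: inj_on_image_mem_iff)
  ultimately show ?thesis
    unfolding is_run_def using trans_rename_aut[OF r] by (simp add: rename_aut_def)
qed

lemma cobuchi_rename_aut_iff:
  assumes r: "\<And>i. r i \<in> states X"
  shows "cobuchi_accepting (rename_aut h X) w (h \<circ> r) \<longleftrightarrow> cobuchi_accepting X w r"
  unfolding cobuchi_accepting_def using acc_rename_aut_iff[OF r r] by simp

lemma lang_rename_aut: "lang (rename_aut h X) = lang X"
proof (intro equalityI subsetI)
  fix w
  assume "w \<in> lang X"
  then obtain r where "is_run X w r" "cobuchi_accepting X w r"
    unfolding lang_def by blast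
  moreover have "r i \<in> states X" for i
    using run_in_states[OF wf \<open>is_run X w r\<close>] .
  ultimately show "w \<in> lang (rename_aut h X)"
    unfolding lang_def using run_rename_aut_iff cobuchi_rename_aut_iff by blast
next
  fix w
  assume "w \<in> lang (rename_aut h X)"
  then obtain r' where r': "is_run (rename_aut h X) w r'" "cobuchi_accepting (rename_aut h X) w r'"
    unfolding lang_def by blast
  define r where "r i = inv_into (states X) h (r' i)" for i
  have "r' i \<in> h ` states X" for i
    using run_in_states[OF wf_rename_aut r'(1)] by (simp add: rename_aut_def)
  then have r: "r i \<in> states X" and hr: "h (r i) = r' i" for i
    unfolding r_def by (simp_all add: inv_into_into f_inv_into_f)
  then have "h \<circ> r = r'"
    by auto
  then show "w \<in> lang X"
    unfolding lang_def using r' run_rename_aut_iff[OF r] cobuchi_rename_aut_iff[OF r] by auto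
qed

lemma is_GFG_rename_aut:
  assumes "is_GFG X"
  shows "is_GFG (rename_aut h X)"
proof -
  obtain f where f: "f [] = init X" "\<And>u \<sigma>. (f u, \<sigma>, f (u @ [\<sigma>])) \<in> Delta X"
    "\<And>w. w \<in> lang X \<Longrightarrow> cobuchi_accepting X w (\<lambda>i. f (prefix_word w i))"
    using assms unfolding is_GFG_def by blast
  have fS: "f u \<in> states X" for u
    using f(2)[of u] by (simp add: Delta_def)
  have "cobuchi_accepting (rename_aut h X) w (\<lambda>i. h (f (prefix_word w i)))"
    if "w \<in> lang X" for w
    using cobuchi_rename_aut_iff[of "\<lambda>i. f (prefix_word w i)"] fS f(3)[OF that]
    by (simp add: comp_def)
  moreover have "h (f []) = init (rename_aut h X)"
    using f(1) by (simp add: rename_aut_def)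
  ultimately show ?thesis
    unfolding is_GFG_def lang_rename_aut using Delta_rename_aut[OF f(2)]
    by (intro exI[of _ "\<lambda>u. h (f u)"]) simp
qed

lemma is_tDCW_rename_aut:
  assumes T: "is_tDCW X"
  shows "is_tDCW (rename_aut h X)"
  unfolding is_tDCW_def
proof (intro conjI ballI allI wf_rename_aut)
  fix q \<sigma>
  assume "q \<in> states (rename_aut h X)"
  then obtain a where a: "a \<in> states X" "q = h a"
    by (auto simp: rename_aut_def)
  have "card (h ` trans X a \<sigma>) = card (trans X a \<sigma>)"
    using card_image[OF inj_on_subset[OF inj trans_subset_states[OF a(1)]]] .
  also have "\<dots> = 1"
    using T a(1) by (simp add: is_tDCW_def)
  finally show "card (trans (rename_aut h X) q \<sigma>) = 1"
    using trans_rename_aut[OF a(1)] a(2) by simp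
qed

lemma card_states_rename_aut: "card (states (rename_aut h X)) = card (states X)"
  using card_image[OF inj] by (simp add: rename_aut_def)

end

lemma ex_nat_copy:
  fixes X :: "('s, 'a) tNCW"
  assumes wf: "wf_aut X"
  obtains Y :: "(nat, 'a) tNCW"
  where "wf_aut Y" "lang Y = lang X" "card (states Y) = card (states X)"
    "is_GFG X \<Longrightarrow> is_GFG Y" "is_tDCW X \<Longrightarrow> is_tDCW Y"
proof -
  have "finite (states X)"
    using wf by (simp add: wf_aut_def)
  then obtain h :: "'s \<Rightarrow> nat" where h: "inj_on h (states X)"
    using finite_imp_inj_to_nat_seg[of "states X"] by blast
  show thesis
    using that[OF wf_rename_aut[OF wf h] lang_rename_aut[OF wf h] card_states_rename_aut[OF wf h]
        is_GFG_rename_aut[OF wf h] is_tDCW_rename_aut[OF wf h]] .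
qed

lemma tDCW_minimal_imp_GFG_minimal:
  fixes A :: "('s, 'a) tNCW"
  assumes T: "is_tDCW A" and L: "lang A = L"
    and min: "\<forall>D :: (nat, 'a) tNCW. is_tDCW D \<and> lang D = L \<longrightarrow> card (states A) \<le> card (states D)"
    and pos: "tDCW_positive L"
  shows "GFG_minimal A"
  unfolding GFG_minimal_def
proof (intro allI impI)
  fix C :: "('s, 'a) tNCW"
  assume C: "wf_aut C \<and> is_GFG C \<and> lang C = lang A"
  let ?tDCW = "\<lambda>n. \<exists>D :: (nat, 'a) tNCW. is_tDCW D \<and> lang D = L \<and> card (states D) = n"
  have wfA: "wf_aut A"
    using T by (simp add: is_tDCW_def)
  obtain D0 :: "(nat, 'a) tNCW"
    where D0: "wf_aut D0" "lang D0 = lang A" "card (states D0) = card (states A)"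
      "is_GFG A \<Longrightarrow> is_GFG D0" "is_tDCW A \<Longrightarrow> is_tDCW D0"
    using ex_nat_copy[OF wfA] by blast
  then have "?tDCW (card (states D0))"
    using T L by blast
  then have "?tDCW (min_tDCW_size L)"
    unfolding min_tDCW_size_def by (rule LeastI)
  then have "card (states A) \<le> min_tDCW_size L"
    using min by auto
  also have "\<dots> \<le> min_GFG_size L"
    using pos by (simp add: tDCW_positive_def)
  also have "\<dots> \<le> card (states C)"
  proof -
    obtain Y :: "(nat, 'a) tNCW"
      where "wf_aut Y" "lang Y = lang C" "card (states Y) = card (states C)"
        "is_GFG C \<Longrightarrow> is_GFG Y" "is_tDCW C \<Longrightarrow> is_tDCW Y"
      using ex_nat_copy[of C] C by blast
    then have "wf_aut Y \<and> is_GFG Y \<and> lang Y = L \<and> card (states Y) = card (states C)"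
      using C L by simp
    then show ?thesis
      unfolding min_GFG_size_def by (intro Least_le) blast
  qed
  finally show "card (states A) \<le> card (states C)" .
qed

section \<open>Safe isomorphism of minimal automata\<close>

lemma safe_succ_tDCW:
  "is_tDCW A \<Longrightarrow> q \<in> states A \<Longrightarrow> q' \<in> safe_succ A q \<sigma> \<longleftrightarrow> safe_step A q \<sigma> \<and> q' = dstep A q \<sigma>"
  unfolding safe_succ_def Delta_def safe_step_def by (auto simp: trans_tDCW)

lemma safe_isomorphic_by_lang_pair:
  assumes A: "nice_tDCW A" and B: "nice_tDCW B" and min: "safe_minimal B"
    and bij: "bij_betw \<kappa> (states A) (states B)"
    and \<kappa>: "\<And>p. p \<in> states A \<Longrightarrow> lang_pair B (\<kappa> p) = lang_pair A p"
  shows "safe_isomorphic A B"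
proof -
  have TA: "is_tDCW A" and TB: "is_tDCW B"
    using A B by (simp_all add: nice_tDCW_is_tDCW)
  have \<kappa>S: "\<kappa> p \<in> states B" if "p \<in> states A" for p
    using bij that by (simp add: bij_betw_apply)
  have step: "safe_step B (\<kappa> q) \<sigma> \<longleftrightarrow> safe_step A q \<sigma>" if q: "q \<in> states A" for q \<sigma>
  proof -
    have "safe_le A q B (\<kappa> q)" and "safe_le B (\<kappa> q) A q"
      using \<kappa>[OF q] by (simp_all add: lang_pair_eq_iff)
    then show ?thesis
      using safe_le_dstep[OF A q, of B "\<kappa> q" \<sigma>] safe_le_dstep[OF B \<kappa>S[OF q], of A q \<sigma>] by blast
  qed
  have succ: "\<kappa> (dstep A q \<sigma>) = dstep B (\<kappa> q) \<sigma>" if q: "q \<in> states A" and s: "safe_step A q \<sigma>" for q \<sigma>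
  proof -
    have "lang_pair B (\<kappa> (dstep A q \<sigma>)) = lang_pair A (dstep A q \<sigma>)"
      using \<kappa>[OF dstep_in_states[OF TA q]] .
    also have "\<dots> = lang_pair B (dstep B (\<kappa> q) \<sigma>)"
      using lang_pair_eq_dsteps[OF A B q \<kappa>S[OF q] \<kappa>[OF q, symmetric], of "[\<sigma>]"] s by simp
    finally show ?thesis
      using inj_onD[OF min[unfolded safe_minimal_def]] \<kappa>S[OF dstep_in_states[OF TA q]]
        dstep_in_states[OF TB \<kappa>S[OF q]] by blast
  qed
  have "q' \<in> safe_succ A q \<sigma> \<longleftrightarrow> \<kappa> q' \<in> safe_succ B (\<kappa> q) \<sigma>"
    if q: "q \<in> states A" and q': "q' \<in> states A" for q q' \<sigma>
  proof -
    have "q' = dstep A q \<sigma> \<longleftrightarrow> \<kappa> q' = \<kappa> (dstep A q \<sigma>)"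
      using bij q' dstep_in_states[OF TA q] by (auto simp: bij_betw_def inj_on_eq_iff)
    then show ?thesis
      unfolding safe_succ_tDCW[OF TA q] safe_succ_tDCW[OF TB \<kappa>S[OF q]]
      using step[OF q] succ[OF q] by auto
  qed
  then show ?thesis
    unfolding safe_isomorphic_def using bij by blast
qed

theorem mainTheorem13:
  fixes L :: "(nat \<Rightarrow> 'a::finite) set"
    and A1 :: "('s1, 'a) tNCW" and A2 :: "('s2, 'a) tNCW"
  assumes "omega_regular L" and "tDCW_positive L"
    and "is_tDCW A1" and "nice A1" and "lang A1 = L"
    and "\<forall>D :: (nat, 'a) tNCW. is_tDCW D \<and> lang D = L \<longrightarrow> card (states A1) \<le> card (states D)"
    and "is_tDCW A2" and "nice A2" and "lang A2 = L"
    and "\<forall>D :: (nat, 'a) tNCW. is_tDCW D \<and> lang D = L \<longrightarrow> card (states A2) \<le> card (states D)"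
  shows "safe_isomorphic A1 A2"
proof -
  have N1: "nice_tDCW A1" and N2: "nice_tDCW A2" and L: "lang A1 = lang A2"
    using assms by (simp_all add: nice_tDCW_def)
  have S1: "comps_maximal A1 \<and> safe_minimal A1" and S2: "comps_maximal A2 \<and> safe_minimal A2"
    using GFG_minimal_imp_comps_maximal_safe_minimal[OF N1 tDCW_minimal_imp_GFG_minimal[OF assms(3,5,6,2)]]
      GFG_minimal_imp_comps_maximal_safe_minimal[OF N2 tDCW_minimal_imp_GFG_minimal[OF assms(7,9,10,2)]]
    by simp_all
  obtain \<kappa> where \<kappa>: "inj_on \<kappa> (states A1)" "\<kappa> ` states A1 \<subseteq> states A2"
    "\<And>p. p \<in> states A1 \<Longrightarrow> lang_pair A2 (\<kappa> p) = lang_pair A1 p"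
    using lang_pair_embedding[OF N1 N2 L conjunct1[OF S1] conjunct2[OF S1]] by blast
  obtain \<kappa>' where \<kappa>': "inj_on \<kappa>' (states A2)" "\<kappa>' ` states A2 \<subseteq> states A1"
    "\<And>p. p \<in> states A2 \<Longrightarrow> lang_pair A1 (\<kappa>' p) = lang_pair A2 p"
    using lang_pair_embedding[OF N2 N1 L[symmetric] conjunct1[OF S2] conjunct2[OF S2]] by blast
  have "card (states A2) \<le> card (\<kappa> ` states A1)"
    using card_inj_on_le[OF \<kappa>'(1,2) finite_states[OF assms(3)]] card_image[OF \<kappa>(1)] by simp
  then have "\<kappa> ` states A1 = states A2"
    using card_seteq[OF finite_states[OF assms(7)] \<kappa>(2)] by simp
  then have "bij_betw \<kappa> (states A1) (states A2)"
    using \<kappa>(1) by (simp add: bij_betw_def)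
  then show ?thesis
    using safe_isomorphic_by_lang_pair[OF N1 N2 conjunct2[OF S2] _ \<kappa>(3)] by simp
qed

end
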